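(* Let $J\subset\mathbb{R}\setminus\{0\}$ be compact. Then there is a constant $C>0$ such that \[ \Big|\int_y^1e^{-i\varphi(x,\alpha)}dx\Big|\le C(1-y)^3 \] for all $y\in[0,1)$ and all $\alpha\in J$.
   Context: For $\alpha\in\mathbb{R}\setminus\{0\}$ and $y\in(-1,1)$, $\varphi(y,\alpha):=-\frac{2\alpha}{(1-y)^2}+\frac{2\alpha}{1-y}-\frac{2}{\alpha}\log(1-y)$. *)

theory Defs
  imports "HOL-Analysis.Analysis"
begin

definition phi :: "real \<Rightarrow> real \<Rightarrow> real" where
  "phi y \<alpha> = - 2 * \<alpha> / (1 - y)^2 + 2 * \<alpha> / (1 - y) - (2 / \<alpha>) * ln (1 - y)"

end

theory Submission
  imports Defs
begin

text \<open>
  Integrate by parts once against the amplitude \<open>h = 1/\<phi>'\<close>. Writing \<open>u = 1 - x\<close>, one has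
  \<open>\<phi>'(x) = -N(\<alpha>, u) / u^3\<close> with \<open>N(\<alpha>, 0) = 4\<alpha> \<noteq> 0\<close>, and by compactness \<open>N\<close> stays away from zero
  on \<open>J \<times> [0, \<delta>]\<close>. Hence \<open>h = O(u^3)\<close> and \<open>h' = O(u^2)\<close> uniformly in \<open>\<alpha> \<in> J\<close>, and the integral
  over \<open>[y, 1]\<close> is bounded by \<open>|h(y)| + \<integral>|h'| = O((1 - y)^3)\<close>. For \<open>1 - y \<ge> \<delta>\<close> the trivial
  bound \<open>1 - y \<le> (1 - y)^3 / \<delta>^2\<close> suffices.
\<close>

lemma integrable_on_Icc_if_bounded_continuous_on_Ioo:
  fixes f :: "real \<Rightarrow> 'a::euclidean_space"
  assumes "continuous_on {a<..<b} f" and "\<And>x. x \<in> {a<..<b} \<Longrightarrow> norm (f x) \<le> B"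
  shows "f integrable_on {a..b}"
proof -
  have "f absolutely_integrable_on {a<..<b}"
    by (rule measurable_bounded_by_integrable_imp_absolutely_integrable[where g = "\<lambda>_. B"])
      (use assms in \<open>auto intro: continuous_imp_measurable_on_sets_lebesgue
                         simp flip: integrable_on_Icc_iff_Ioo\<close>)
  then show ?thesis
    by (simp add: integrable_on_Icc_iff_Ioo absolutely_integrable_on_def)
qed

lemma exp_phase_integrable:
  fixes \<phi> :: "real \<Rightarrow> real"
  assumes "\<And>x. x \<in> {a<..<b} \<Longrightarrow> isCont \<phi> x"
  shows "(\<lambda>x. exp (- \<i> * of_real (\<phi> x))) integrable_on {a..b}"
proof (rule integrable_on_Icc_if_bounded_continuous_on_Ioo)
  show "continuous_on {a<..<b} (\<lambda>x. exp (- \<i> * of_real (\<phi> x)))"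
    using assms by (intro continuous_at_imp_continuous_on) (auto intro!: continuous_intros)
  show "norm (exp (- \<i> * of_real (\<phi> x))) \<le> 1" for x
    by simp
qed

lemma norm_integral_exp_phase_le_length:
  fixes \<phi> :: "real \<Rightarrow> real"
  assumes "a \<le> b" and "\<And>x. x \<in> {a<..<b} \<Longrightarrow> isCont \<phi> x"
  shows "norm (integral {a..b} (\<lambda>x. exp (- \<i> * of_real (\<phi> x)))) \<le> b - a"
proof -
  have "norm (integral {a..b} (\<lambda>x. exp (- \<i> * of_real (\<phi> x)))) \<le> integral {a..b} (\<lambda>_. 1::real)"
    by (rule integral_norm_bound_integral[OF exp_phase_integrable[OF assms(2)]]) auto
  then show ?thesis
    using assms(1) by simp
qed

lemma norm_integral_exp_phase_le:
  fixes \<phi> \<phi>' h h' g :: "real \<Rightarrow> real"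
  assumes "a \<le> b"
    and \<phi>: "\<And>x. x \<in> {a..<b} \<Longrightarrow> (\<phi> has_real_derivative \<phi>' x) (at x)"
    and h: "\<And>x. x \<in> {a..<b} \<Longrightarrow> (h has_real_derivative h' x) (at x)"
    and h_inverse: "\<And>x. x \<in> {a..<b} \<Longrightarrow> h x * \<phi>' x = 1"
    and "isCont h b" "h b = 0"
    and g: "g integrable_on {a..b}" "\<And>x. x \<in> {a..b} \<Longrightarrow> \<bar>h' x\<bar> \<le> g x"
  shows "norm (integral {a..b} (\<lambda>x. exp (- \<i> * of_real (\<phi> x)))) \<le> \<bar>h a\<bar> + integral {a..b} g"
proof -
  define E where "E = (\<lambda>x. exp (- \<i> * of_real (\<phi> x)))"
  define F where "F x = \<i> * of_real (h x) * E x" for x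
  define G where "G x = of_real (h' x) * E x" for x
  have norm_E: "norm (E x) = 1" for x
    by (simp add: E_def)
  have norm_F: "norm (F x) = \<bar>h x\<bar>" for x
    by (simp add: F_def norm_mult norm_E)
  have E_integrable: "E integrable_on {a..b}"
    unfolding E_def by (intro exp_phase_integrable DERIV_isCont[OF \<phi>]) simp
  \<comment> \<open>Because \<open>h \<phi>' = 1\<close>, the derivative of \<open>F\<close> is \<open>E\<close> up to the small term \<open>\<i> G\<close>.\<close>
  have F_deriv: "(F has_vector_derivative E x + \<i> * G x) (at x)" if "x \<in> {a..<b}" for x
  proof -
    have "(E has_vector_derivative (- \<i> * of_real (\<phi>' x)) * E x) (at x)"
      unfolding E_def
      by (rule field_vector_diff_chain_at[where g = exp, unfolded comp_def, OF _ DERIV_exp])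
        (intro has_vector_derivative_mult_right has_vector_derivative_of_real \<phi> that)
    then have "(F has_vector_derivative
        \<i> * (of_real (h x) * ((- \<i> * of_real (\<phi>' x)) * E x) + of_real (h' x) * E x)) (at x)"
      unfolding F_def mult.assoc
      by (intro has_vector_derivative_mult_right has_vector_derivative_mult
          has_vector_derivative_of_real h that)
    moreover have "of_real (h x) * of_real (\<phi>' x) = (1::complex)"
      using h_inverse[OF that] by (metis of_real_1 of_real_mult)
    ultimately show ?thesis
      unfolding G_def by (simp add: algebra_simps)
  qed
  have "continuous (at b within {a..b}) F"
  proof -
    have "((\<lambda>x. \<bar>h x\<bar>) \<longlongrightarrow> 0) (at b within {a..b})"
      using \<open>isCont h b\<close> \<open>h b = 0\<close>
      by (metis abs_zero continuous_at_imp_continuous_within continuous_within isCont_rabs)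
    then have "(F \<longlongrightarrow> 0) (at b within {a..b})"
      by (rule Lim_null_comparison[rotated]) (simp add: norm_F)
    then show ?thesis
      using \<open>h b = 0\<close> by (simp add: continuous_within F_def)
  qed
  moreover have "continuous (at x within {a..b}) F" if "x \<in> {a..<b}" for x
    using F_deriv[OF that] continuous_at_imp_continuous_within has_vector_derivative_continuous
    by blast
  ultimately have "continuous_on {a..b} F"
    using continuous_on_eq_continuous_within by fastforce
  then have FTC: "((\<lambda>x. E x + \<i> * G x) has_integral - F a) {a..b}"
    using fundamental_theorem_of_calculus_interior[OF \<open>a \<le> b\<close>, of F] F_deriv
    by (simp add: F_def \<open>h b = 0\<close>)
  have G_integrable: "G integrable_on {a..b}"
  proof -
    have "(\<lambda>x. - \<i> * ((E x + \<i> * G x) - E x)) integrable_on {a..b}"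
      by (intro integrable_on_mult_right integrable_diff E_integrable has_integral_integrable[OF FTC])
    then show ?thesis
      by (simp add: algebra_simps)
  qed
  have "integral {a..b} E = - F a - \<i> * integral {a..b} G"
    using integral_unique[OF FTC] integral_add[OF E_integrable integrable_on_mult_right[OF G_integrable]]
    by (simp add: algebra_simps)
  moreover have "norm (integral {a..b} G) \<le> integral {a..b} g"
    using G_integrable g by (intro integral_norm_bound_integral) (auto simp: G_def norm_mult norm_E)
  ultimately have "norm (integral {a..b} E) \<le> norm (F a) + integral {a..b} g"
    using norm_triangle_ineq4[of "- F a" "\<i> * integral {a..b} G"] by (simp add: norm_mult)
  then show ?thesis
    unfolding E_def[symmetric] norm_F[symmetric] .
qed

definition phi_deriv_numer :: "real \<Rightarrow> real \<Rightarrow> real" where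
  "phi_deriv_numer \<alpha> u = 4 * \<alpha> - 2 * \<alpha> * u - 2 * u^2 / \<alpha>"

definition inverse_phi_deriv :: "real \<Rightarrow> real \<Rightarrow> real" where
  "inverse_phi_deriv \<alpha> x = - ((1 - x)^3 / phi_deriv_numer \<alpha> (1 - x))"

definition inverse_phi_deriv_factor :: "real \<Rightarrow> real \<Rightarrow> real" where
  "inverse_phi_deriv_factor \<alpha> u =
     (3 * phi_deriv_numer \<alpha> u + u * (2 * \<alpha> + 4 * u / \<alpha>)) / (phi_deriv_numer \<alpha> u)^2"

lemma has_real_derivative_phi:
  assumes "x < 1" "\<alpha> \<noteq> 0"
  shows "((\<lambda>x. phi x \<alpha>) has_real_derivative - phi_deriv_numer \<alpha> (1 - x) / (1 - x)^3) (at x)"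
proof -
  have "((\<lambda>u. - 2 * \<alpha> / u^2 + 2 * \<alpha> / u - (2 / \<alpha>) * ln u) has_real_derivative
          phi_deriv_numer \<alpha> u / u^3) (at u)" if "u > 0" for u
    using that assms
    by (auto intro!: derivative_eq_intros
        simp: phi_deriv_numer_def field_simps power2_eq_square power3_eq_cube)
  then have "((\<lambda>x. phi x \<alpha>) has_real_derivative
      phi_deriv_numer \<alpha> (1 - x) / (1 - x)^3 * (- 1)) (at x)"
    unfolding phi_def using assms by (intro DERIV_chain2) (auto intro!: derivative_eq_intros)
  then show ?thesis
    by simp
qed

lemma has_real_derivative_inverse_phi_deriv:
  assumes "phi_deriv_numer \<alpha> (1 - x) \<noteq> 0" "\<alpha> \<noteq> 0"
  shows "(inverse_phi_deriv \<alpha> has_real_derivative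
           (1 - x)^2 * inverse_phi_deriv_factor \<alpha> (1 - x)) (at x)"
proof -
  have N: "(phi_deriv_numer \<alpha> has_real_derivative - (2 * \<alpha> + 4 * u / \<alpha>)) (at u)" for u
    unfolding phi_deriv_numer_def[abs_def] using assms(2) by (auto intro!: derivative_eq_intros)
  have "((\<lambda>u. - (u^3 / phi_deriv_numer \<alpha> u)) has_real_derivative
          - (u^2 * inverse_phi_deriv_factor \<alpha> u)) (at u)" if "phi_deriv_numer \<alpha> u \<noteq> 0" for u
    using that assms
    by (auto intro!: derivative_eq_intros N
        simp: inverse_phi_deriv_factor_def field_simps power2_eq_square power3_eq_cube)
  then have "(inverse_phi_deriv \<alpha> has_real_derivative
      - ((1 - x)^2 * inverse_phi_deriv_factor \<alpha> (1 - x)) * (- 1)) (at x)"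
    unfolding inverse_phi_deriv_def[abs_def] using assms
    by (intro DERIV_chain2) (auto intro!: derivative_eq_intros)
  then show ?thesis
    by simp
qed

lemma phi_deriv_numer_nonzero:
  assumes "\<alpha> \<noteq> 0" "0 \<le> u" "u \<le> 1/2" "u \<le> \<bar>\<alpha>\<bar>"
  shows "phi_deriv_numer \<alpha> u \<noteq> 0"
proof -
  have "\<alpha> * phi_deriv_numer \<alpha> u = \<alpha>^2 * (4 - 2 * u) - 2 * u^2"
    using assms(1) by (simp add: phi_deriv_numer_def field_simps power2_eq_square)
  moreover have "u^2 \<le> \<alpha>^2"
    using assms(2,4) abs_le_square_iff[of u \<alpha>] by simp
  moreover have "\<alpha>^2 * 3 \<le> \<alpha>^2 * (4 - 2 * u)"
    using assms(3) by (intro mult_left_mono) auto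
  ultimately have "\<alpha>^2 \<le> \<alpha> * phi_deriv_numer \<alpha> u"
    by linarith
  then show ?thesis
    using assms(1) by auto
qed

lemma phi_deriv_numer_uniform_bounds:
  assumes "compact J" "0 \<notin> J"
  obtains \<delta> M where "0 < \<delta>" and "\<And>\<alpha> u. \<alpha> \<in> J \<Longrightarrow> u \<in> {0..\<delta>} \<Longrightarrow>
      phi_deriv_numer \<alpha> u \<noteq> 0 \<and> \<bar>1 / phi_deriv_numer \<alpha> u\<bar> \<le> M \<and>
      \<bar>inverse_phi_deriv_factor \<alpha> u\<bar> \<le> M"
proof -
  obtain a where "0 < a" and a: "\<And>\<alpha>. \<alpha> \<in> J \<Longrightarrow> a \<le> \<bar>\<alpha>\<bar>"
    using separate_point_closed[OF compact_imp_closed[OF assms(1)] assms(2)] by auto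
  define \<delta> where "\<delta> = min (1/2) a"
  define K where "K = J \<times> {0..\<delta>}"
  have nonzero: "fst p \<noteq> 0 \<and> phi_deriv_numer (fst p) (snd p) \<noteq> 0" if "p \<in> K" for p
  proof -
    have "fst p \<in> J" "0 \<le> snd p" "snd p \<le> 1/2" "snd p \<le> a"
      using that by (auto simp: K_def \<delta>_def)
    moreover have "fst p \<noteq> 0"
      using assms(2) \<open>fst p \<in> J\<close> by auto
    moreover have "snd p \<le> \<bar>fst p\<bar>"
      using a[OF \<open>fst p \<in> J\<close>] \<open>snd p \<le> a\<close> by linarith
    ultimately show ?thesis
      by (simp add: phi_deriv_numer_nonzero)
  qed
  have "compact K"
    unfolding K_def using assms(1) by (intro compact_Times compact_Icc)
  moreover have "continuous_on K (\<lambda>p. 1 / phi_deriv_numer (fst p) (snd p))"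
    using nonzero unfolding phi_deriv_numer_def by (auto intro!: continuous_intros)
  ultimately obtain M\<^sub>1 where M\<^sub>1: "\<And>p. p \<in> K \<Longrightarrow> norm (1 / phi_deriv_numer (fst p) (snd p)) \<le> M\<^sub>1"
    using continuous_on_compact_bound by blast
  have "continuous_on K (\<lambda>p. inverse_phi_deriv_factor (fst p) (snd p))"
    using nonzero unfolding inverse_phi_deriv_factor_def phi_deriv_numer_def
    by (auto intro!: continuous_intros)
  with \<open>compact K\<close> obtain M\<^sub>2 where M\<^sub>2: "\<And>p. p \<in> K \<Longrightarrow> norm (inverse_phi_deriv_factor (fst p) (snd p)) \<le> M\<^sub>2"
    using continuous_on_compact_bound by blast
  show ?thesis
  proof
    show "0 < \<delta>"
      using \<open>0 < a\<close> by (simp add: \<delta>_def)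
    fix \<alpha> u assume "\<alpha> \<in> J" "u \<in> {0..\<delta>}"
    then have "(\<alpha>, u) \<in> K"
      by (simp add: K_def)
    then show "phi_deriv_numer \<alpha> u \<noteq> 0 \<and> \<bar>1 / phi_deriv_numer \<alpha> u\<bar> \<le> max M\<^sub>1 M\<^sub>2 \<and>
        \<bar>inverse_phi_deriv_factor \<alpha> u\<bar> \<le> max M\<^sub>1 M\<^sub>2"
      using nonzero[OF \<open>(\<alpha>, u) \<in> K\<close>] M\<^sub>1[OF \<open>(\<alpha>, u) \<in> K\<close>] M\<^sub>2[OF \<open>(\<alpha>, u) \<in> K\<close>]
      by (simp add: le_max_iff_disj)
  qed
qed

lemma has_integral_power2_one_minus:
  fixes y :: real
  assumes "y \<le> 1"
  shows "((\<lambda>x. (1 - x)^2) has_integral (1 - y)^3 / 3) {y..1}"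
proof -
  have "((\<lambda>x. (1 - x)^2) has_integral
      (\<lambda>x. - ((1 - x)^3 / 3)) 1 - (\<lambda>x. - ((1 - x)^3 / 3)) y) {y..1}"
    using assms
    by (intro fundamental_theorem_of_calculus)
      (auto intro!: derivative_eq_intros simp: has_real_derivative_iff_has_vector_derivative[symmetric]
        power2_eq_square)
  then show ?thesis
    by simp
qed

lemma norm_integral_exp_phi_le_near_one:
  assumes "\<alpha> \<noteq> 0" "y < 1"
    and bounds: "\<And>u. u \<in> {0..1 - y} \<Longrightarrow>
      phi_deriv_numer \<alpha> u \<noteq> 0 \<and> \<bar>1 / phi_deriv_numer \<alpha> u\<bar> \<le> M \<and>
      \<bar>inverse_phi_deriv_factor \<alpha> u\<bar> \<le> M"
  shows "norm (integral {y..1} (\<lambda>x. exp (- \<i> * complex_of_real (phi x \<alpha>)))) \<le> 4/3 * M * (1 - y)^3"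
proof -
  have N: "phi_deriv_numer \<alpha> (1 - x) \<noteq> 0" "\<bar>1 / phi_deriv_numer \<alpha> (1 - x)\<bar> \<le> M"
    "\<bar>inverse_phi_deriv_factor \<alpha> (1 - x)\<bar> \<le> M" if "x \<in> {y..1}" for x
    using bounds[of "1 - x"] that by auto
  have g: "((\<lambda>x. M * (1 - x)^2) has_integral M * ((1 - y)^3 / 3)) {y..1}"
    using has_integral_power2_one_minus assms(2) by (intro has_integral_mult_right) auto
  have main: "norm (integral {y..1} (\<lambda>x. exp (- \<i> * complex_of_real (phi x \<alpha>))))
      \<le> \<bar>inverse_phi_deriv \<alpha> y\<bar> + integral {y..1} (\<lambda>x. M * (1 - x)^2)"
  proof (rule norm_integral_exp_phase_le)
    fix x assume x: "x \<in> {y..<1}"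
    then show "((\<lambda>x. phi x \<alpha>) has_real_derivative - phi_deriv_numer \<alpha> (1 - x) / (1 - x)^3) (at x)"
      using assms(1) by (intro has_real_derivative_phi) auto
    show "(inverse_phi_deriv \<alpha> has_real_derivative
        (1 - x)^2 * inverse_phi_deriv_factor \<alpha> (1 - x)) (at x)"
      using N(1) x assms(1) by (intro has_real_derivative_inverse_phi_deriv) auto
    show "inverse_phi_deriv \<alpha> x * (- phi_deriv_numer \<alpha> (1 - x) / (1 - x)^3) = 1"
      using N(1) x by (auto simp: inverse_phi_deriv_def)
  next
    show "isCont (inverse_phi_deriv \<alpha>) 1"
      unfolding inverse_phi_deriv_def[abs_def] phi_deriv_numer_def using assms(1)
      by (auto intro!: continuous_intros)
  next
    fix x assume "x \<in> {y..1}"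
    then have "(1 - x)^2 * \<bar>inverse_phi_deriv_factor \<alpha> (1 - x)\<bar> \<le> (1 - x)^2 * M"
      by (intro mult_left_mono N(3)) auto
    then show "\<bar>(1 - x)^2 * inverse_phi_deriv_factor \<alpha> (1 - x)\<bar> \<le> M * (1 - x)^2"
      by (simp add: abs_mult mult.commute)
  qed (use assms(2) g in \<open>auto simp: inverse_phi_deriv_def\<close>)
  have "\<bar>inverse_phi_deriv \<alpha> y\<bar> = (1 - y)^3 * \<bar>1 / phi_deriv_numer \<alpha> (1 - y)\<bar>"
    using assms(2) by (simp add: inverse_phi_deriv_def abs_divide)
  also have "\<dots> \<le> (1 - y)^3 * M"
    using N(2)[of y] assms(2) by (intro mult_left_mono) auto
  finally have "\<bar>inverse_phi_deriv \<alpha> y\<bar> \<le> (1 - y)^3 * M" .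
  moreover have "(1 - y)^3 * M + M * ((1 - y)^3 / 3) = 4/3 * M * (1 - y)^3"
    by (simp add: algebra_simps)
  ultimately show ?thesis
    using main unfolding integral_unique[OF g] by linarith
qed

lemma norm_integral_exp_phi_le_away_from_one:
  assumes "\<alpha> \<noteq> 0" "0 < \<delta>" "\<delta> \<le> 1 - y"
  shows "norm (integral {y..1} (\<lambda>x. exp (- \<i> * complex_of_real (phi x \<alpha>)))) \<le> 1 / \<delta>^2 * (1 - y)^3"
proof -
  have "norm (integral {y..1} (\<lambda>x. exp (- \<i> * complex_of_real (phi x \<alpha>)))) \<le> 1 - y"
    using assms by (intro norm_integral_exp_phase_le_length DERIV_isCont[OF has_real_derivative_phi]) auto
  also have "\<dots> \<le> 1 / \<delta>^2 * (1 - y)^3"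
  proof -
    have "\<delta>^2 * (1 - y) \<le> (1 - y)^2 * (1 - y)"
      using assms(2,3) by (intro mult_right_mono power_mono) auto
    then show ?thesis
      using assms(2) by (simp add: field_simps power3_eq_cube power2_eq_square)
  qed
  finally show ?thesis .
qed

theorem lemma3p33:
  fixes J :: "real set"
  assumes "compact J" and "0 \<notin> J"
  shows "\<exists>C>0. \<forall>y\<in>{0..<1}. \<forall>\<alpha>\<in>J.
           norm (integral {y..1} (\<lambda>x. exp (- \<i> * complex_of_real (phi x \<alpha>)))) \<le> C * (1 - y) ^ 3"
proof -
  obtain \<delta> M where "0 < \<delta>" and bounds: "\<And>\<alpha> u. \<alpha> \<in> J \<Longrightarrow> u \<in> {0..\<delta>} \<Longrightarrow>
      phi_deriv_numer \<alpha> u \<noteq> 0 \<and> \<bar>1 / phi_deriv_numer \<alpha> u\<bar> \<le> M \<and>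
      \<bar>inverse_phi_deriv_factor \<alpha> u\<bar> \<le> M"
    using phi_deriv_numer_uniform_bounds[OF assms] by blast
  define C where "C = max (1 / \<delta>^2) (4/3 * M)"
  have "norm (integral {y..1} (\<lambda>x. exp (- \<i> * complex_of_real (phi x \<alpha>)))) \<le> C * (1 - y)^3"
    if y: "y \<in> {0..<1}" and "\<alpha> \<in> J" for y \<alpha>
  proof -
    have "\<alpha> \<noteq> 0"
      using \<open>\<alpha> \<in> J\<close> assms(2) by auto
    have "1 / \<delta>^2 * (1 - y)^3 \<le> C * (1 - y)^3" "4/3 * M * (1 - y)^3 \<le> C * (1 - y)^3"
      using y by (intro mult_right_mono; simp add: C_def)+
    moreover have "1 - y \<le> \<delta> \<Longrightarrow> norm (integral {y..1} (\<lambda>x. exp (- \<i> * complex_of_real (phi x \<alpha>))))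
        \<le> 4/3 * M * (1 - y)^3"
      using y \<open>\<alpha> \<in> J\<close> \<open>\<alpha> \<noteq> 0\<close> bounds by (intro norm_integral_exp_phi_le_near_one) auto
    moreover have "\<delta> \<le> 1 - y \<Longrightarrow> norm (integral {y..1} (\<lambda>x. exp (- \<i> * complex_of_real (phi x \<alpha>))))
        \<le> 1 / \<delta>^2 * (1 - y)^3"
      using \<open>\<alpha> \<noteq> 0\<close> \<open>0 < \<delta>\<close> by (rule norm_integral_exp_phi_le_away_from_one)
    ultimately show ?thesis
      by linarith
  qed
  moreover have "0 < C"
    using \<open>0 < \<delta>\<close> by (simp add: C_def less_max_iff_disj)
  ultimately show ?thesis
    by blast
qed

end
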